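(* Let $\{V_0(n)\}_{n\in\mathbb{Z}}$, $\{V_1(n)\}_{n\in\mathbb{Z}}$ be real-valued sequences and $\{f_1(n)\}_{n\in\mathbb{Z}}$ a sequence. Consider the operators on complex-valued sequences $\ell(\mathbb{Z};\mathbb{C})$ $$H_0=-\bigtriangleup^2+V_0(n),\qquad H_1=-\bigtriangleup^2+V_1(n),$$ $$\big(A_1^{(n)}\big)^+=-\bigtriangleup+f_1(n),\qquad \big(A_1^{(n+2)}\big)^+=-\bigtriangleup+f_1(n+2),$$ where $V_0(n)$, $V_1(n)$, $f_1(n)$, $f_1(n+2)$ act as multiplication operators (i.e. $(f_1(n+2)\psi)(n)=f_1(n+2)\psi(n)$). If the operator identity $$H_1\big(A_1^{(n)}\big)^+=\big(A_1^{(n+2)}\big)^+H_0$$ holds on $\ell(\mathbb{Z};\mathbb{C})$, then for all $n$ $$V_1(n)=V_0(n+1)-2\bigtriangleup f_1(n+1),$$ $$-\bigtriangleup^2 f_1(n)+\bigtriangleup V_0(n)-2f_1(n)\bigtriangleup f_1(n+1)=-f_1(n)V_0(n+1)+f_1(n+2)V_0(n).$$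
   Context: For a sequence $\psi:\mathbb{Z}\to\mathbb{C}$, the forward difference is $\bigtriangleup\psi(n)=\psi(n+1)-\psi(n)$ and $\bigtriangleup^2\psi(n)=\psi(n+2)-2\psi(n+1)+\psi(n)$. *)

theory Defs
  imports Complex_Main
begin

definition fdiff :: "(int \<Rightarrow> 'a::ring_1) \<Rightarrow> int \<Rightarrow> 'a" where
  "fdiff \<psi> n = \<psi> (n + 1) - \<psi> n"

definition fdiff2 :: "(int \<Rightarrow> 'a::ring_1) \<Rightarrow> int \<Rightarrow> 'a" where
  "fdiff2 \<psi> n = \<psi> (n + 2) - 2 * \<psi> (n + 1) + \<psi> n"

definition schr_op :: "(int \<Rightarrow> real) \<Rightarrow> (int \<Rightarrow> complex) \<Rightarrow> (int \<Rightarrow> complex)" where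
  "schr_op V \<psi> = (\<lambda>n. - fdiff2 \<psi> n + complex_of_real (V n) * \<psi> n)"

definition aplus_op :: "(int \<Rightarrow> complex) \<Rightarrow> (int \<Rightarrow> complex) \<Rightarrow> (int \<Rightarrow> complex)" where
  "aplus_op g \<psi> = (\<lambda>n. - fdiff \<psi> n + g n * \<psi> n)"

end

theory Submission
  imports Defs
begin

text \<open>Both sides of the intertwining relation are four-point difference operators
  \<open>\<psi> \<mapsto> \<Sum>\<^sub>j c\<^sub>j(n) \<psi>(n + j)\<close>, \<open>j = 0..3\<close>. Testing the identity on Kronecker deltas
  shows that their coefficients agree; the coefficient of \<open>\<psi>(n + 1)\<close> gives the formula
  for \<open>V\<^sub>1\<close> and, after substituting it, the coefficient of \<open>\<psi>(n)\<close> gives the second identity.\<close>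

definition stencil :: "'a::ring_1 list \<Rightarrow> (int \<Rightarrow> 'a) \<Rightarrow> int \<Rightarrow> 'a" where
  "stencil cs \<psi> n = (\<Sum>j<length cs. cs ! j * \<psi> (n + int j))"

lemma stencil_delta:
  assumes "j < length cs"
  shows "stencil cs (\<lambda>k. if k = n + int j then 1 else 0) n = cs ! j"
  using assms by (simp add: stencil_def if_distrib cong: if_cong)

lemma stencil_coeffs_unique:
  assumes "\<And>\<psi>. stencil cs \<psi> n = stencil ds \<psi> n" and "length cs = length ds"
  shows "cs = ds"
proof (rule nth_equalityI)
  fix j assume "j < length cs"
  then show "cs ! j = ds ! j"
    using assms stencil_delta by metis
qed (fact assms(2))

lemma stencil_4:
  "stencil [a, b, c, d] \<psi> n = a * \<psi> n + b * \<psi> (n + 1) + c * \<psi> (n + 2) + d * \<psi> (n + 3)"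
  by (simp add: stencil_def eval_nat_numeral lessThan_Suc add.assoc)

lemma schr_op_aplus_op_stencil:
  "schr_op V (aplus_op g \<psi>) n =
     stencil [(of_real (V n) - 1) * (1 + g n), 3 + 2 * g (n + 1) - of_real (V n),
              - (3 + g (n + 2)), 1] \<psi> n"
  by (simp add: stencil_4 schr_op_def aplus_op_def fdiff_def fdiff2_def algebra_simps)

lemma aplus_op_schr_op_stencil:
  "aplus_op g (schr_op V \<psi>) n =
     stencil [(1 + g n) * (of_real (V n) - 1), 3 + 2 * g n - of_real (V (n + 1)),
              - (3 + g n), 1] \<psi> n"
  by (simp add: stencil_4 schr_op_def aplus_op_def fdiff_def fdiff2_def algebra_simps)

theorem theorem1:
  fixes V0 V1 :: "int \<Rightarrow> real" and f1 :: "int \<Rightarrow> complex"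
  assumes "\<forall>\<psi> :: int \<Rightarrow> complex.
             schr_op V1 (aplus_op f1 \<psi>) = aplus_op (\<lambda>n. f1 (n + 2)) (schr_op V0 \<psi>)"
  shows "(\<forall>n. complex_of_real (V1 n) = complex_of_real (V0 (n + 1)) - 2 * fdiff f1 (n + 1))
    \<and> (\<forall>n. - fdiff2 f1 n + fdiff (\<lambda>k. complex_of_real (V0 k)) n - 2 * f1 n * fdiff f1 (n + 1)
             = - f1 n * complex_of_real (V0 (n + 1)) + f1 (n + 2) * complex_of_real (V0 n))"
proof -
  have coeffs: "[(of_real (V1 n) - 1) * (1 + f1 n), 3 + 2 * f1 (n + 1) - of_real (V1 n),
                 - (3 + f1 (n + 2)), 1]
              = [(1 + f1 (n + 2)) * (of_real (V0 n) - 1), 3 + 2 * f1 (n + 2) - of_real (V0 (n + 1)),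
                 - (3 + f1 (n + 2)), 1]" for n
  proof -
    have "schr_op V1 (aplus_op f1 \<psi>) n = aplus_op (\<lambda>n. f1 (n + 2)) (schr_op V0 \<psi>) n" for \<psi>
      using assms by simp
    then show ?thesis
      unfolding schr_op_aplus_op_stencil aplus_op_schr_op_stencil
      by (rule stencil_coeffs_unique) simp
  qed
  have V1_eq: "complex_of_real (V1 n) = complex_of_real (V0 (n + 1)) - 2 * fdiff f1 (n + 1)" for n
    using coeffs[of n] by (simp add: fdiff_def algebra_simps)
  have "- fdiff2 f1 n + fdiff (\<lambda>k. complex_of_real (V0 k)) n - 2 * f1 n * fdiff f1 (n + 1)
          = - f1 n * complex_of_real (V0 (n + 1)) + f1 (n + 2) * complex_of_real (V0 n)" for n
    using coeffs[of n] unfolding V1_eq by (simp add: fdiff_def fdiff2_def algebra_simps)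
  with V1_eq show ?thesis by blast
qed

end
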